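(* Let $\eta\ge2$, let $P\in\mathfrak N_\eta$, let $R$ be a retract of $P$ which is a tower of nice sections, and let $R(\ell)=\{x,y,z\}$ be a 3-element level set of $R$ with $\lambda(x)\le\lambda(y)\le\lambda(z)$. Then $\lambda(z)-\lambda(x)\le\eta-1$, and in case of equality $\lambda(x)<\lambda(y)<\lambda(z)$.
   Context: All posets are finite; $h_P$ is the height; level sets $P(0)=\min P$, $P(k+1)=\min(P\setminus\bigcup_{i\le k}P(i))$; $A<B$ means $a<b$ for all $a\in A,b\in B$. A retract of $P$ is the image of an idempotent order-preserving self-map; $R(\ell)$ denotes the level sets of $R$ itself, while $\lambda(x)$ denotes the index $k$ with $x\in P(k)$ (the level in $P$). A section is either a 2-element antichain or a poset $P$ of height $h_P\ge1$ with carrier $\{c_{k,j}:k\in[0,h_P],j\in\{0,1,2\}\}$ such that: $c_{0,j}<\dots<c_{h_P,j}$ for each $j$; each $\{c_{k,0},c_{k,1},c_{k,2}\}$ is an antichain; $c_{k,i}<c_{\ell,j}\Rightarrow c_{k,i+1}<c_{\ell,j+1}$ (indices mod 3); and for no $k$ is $P(k)<P(k+1)$ with both 3-element. A section is nice if for all $x<y$: $\{z:z>x\}\not\subseteq\{z:z\ge y\}$ and $\{z:z<y\}\not\subseteq\{z:z\le x\}$. A tower of nice sections is an ordinal sum of nice sections. The horizon of a nice section $P$ of height $\ge2$ is the smallest $\eta\in\mathbb N$ with $P(k)<P(k+\eta)$ for all $k\in[0,h_P-\eta]$; $\mathfrak N_\eta$ is the class of nice sections of height $\ge2$ with horizon $\eta$.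 *)

theory Defs
  imports Main
begin

text \<open>Subposets (e.g. retracts) carry the induced order,
  i.e. the same relation le restricted to a smaller carrier.\<close>

definition poset :: "'a set \<Rightarrow> ('a \<Rightarrow> 'a \<Rightarrow> bool) \<Rightarrow> bool" where
  "poset S le \<longleftrightarrow> finite S \<and> (\<forall>x\<in>S. le x x)
     \<and> (\<forall>x\<in>S. \<forall>y\<in>S. le x y \<and> le y x \<longrightarrow> x = y)
     \<and> (\<forall>x\<in>S. \<forall>y\<in>S. \<forall>z\<in>S. le x y \<and> le y z \<longrightarrow> le x z)"

definition less :: "('a \<Rightarrow> 'a \<Rightarrow> bool) \<Rightarrow> 'a \<Rightarrow> 'a \<Rightarrow> bool" where
  "less le x y \<longleftrightarrow> le x y \<and> x \<noteq> y"

definition minimals :: "'a set \<Rightarrow> ('a \<Rightarrow> 'a \<Rightarrow> bool) \<Rightarrow> 'a set" where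
  "minimals S le = {x \<in> S. \<not> (\<exists>y\<in>S. less le y x)}"

primrec rest :: "'a set \<Rightarrow> ('a \<Rightarrow> 'a \<Rightarrow> bool) \<Rightarrow> nat \<Rightarrow> 'a set" where
  "rest S le 0 = S"
| "rest S le (Suc k) = rest S le k - minimals (rest S le k) le"

text \<open>Level sets: P(0) = min P, P(k+1) = min (P minus the union of P(0..k)).\<close>
definition level :: "'a set \<Rightarrow> ('a \<Rightarrow> 'a \<Rightarrow> bool) \<Rightarrow> nat \<Rightarrow> 'a set" where
  "level S le k = minimals (rest S le k) le"

definition lam :: "'a set \<Rightarrow> ('a \<Rightarrow> 'a \<Rightarrow> bool) \<Rightarrow> 'a \<Rightarrow> nat" where
  "lam S le x = (THE k. x \<in> level S le k)"

definition is_chain :: "'a set \<Rightarrow> ('a \<Rightarrow> 'a \<Rightarrow> bool) \<Rightarrow> 'a set \<Rightarrow> bool" where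
  "is_chain S le C \<longleftrightarrow> C \<subseteq> S \<and> (\<forall>x\<in>C. \<forall>y\<in>C. le x y \<or> le y x)"

definition height :: "'a set \<Rightarrow> ('a \<Rightarrow> 'a \<Rightarrow> bool) \<Rightarrow> nat" where
  "height S le = Max {card C - 1 | C. is_chain S le C}"

definition antichain :: "'a set \<Rightarrow> ('a \<Rightarrow> 'a \<Rightarrow> bool) \<Rightarrow> bool" where
  "antichain A le \<longleftrightarrow> (\<forall>a\<in>A. \<forall>b\<in>A. le a b \<longrightarrow> a = b)"

definition setless :: "('a \<Rightarrow> 'a \<Rightarrow> bool) \<Rightarrow> 'a set \<Rightarrow> 'a set \<Rightarrow> bool" where
  "setless le A B \<longleftrightarrow> (\<forall>a\<in>A. \<forall>b\<in>B. less le a b)"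

definition is_section :: "'a set \<Rightarrow> ('a \<Rightarrow> 'a \<Rightarrow> bool) \<Rightarrow> bool" where
  "is_section S le \<longleftrightarrow> poset S le \<and>
    ((card S = 2 \<and> antichain S le) \<or>
     (height S le \<ge> 1 \<and>
      (\<exists>c :: nat \<Rightarrow> nat \<Rightarrow> 'a.
         inj_on (\<lambda>(k, j). c k j) ({..height S le} \<times> {..<3})
       \<and> S = (\<lambda>(k, j). c k j) ` ({..height S le} \<times> {..<3})
       \<and> (\<forall>j<3. \<forall>k<height S le. less le (c k j) (c (Suc k) j))
       \<and> (\<forall>k\<le>height S le. antichain {c k 0, c k 1, c k 2} le)
       \<and> (\<forall>k\<le>height S le. \<forall>l\<le>height S le. \<forall>i<3. \<forall>j<3.
            less le (c k i) (c l j) \<longrightarrow> less le (c k ((i + 1) mod 3)) (c l ((j + 1) mod 3))))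
      \<and> \<not> (\<exists>k. card (level S le k) = 3 \<and> card (level S le (k + 1)) = 3
               \<and> setless le (level S le k) (level S le (k + 1)))))"

definition nice :: "'a set \<Rightarrow> ('a \<Rightarrow> 'a \<Rightarrow> bool) \<Rightarrow> bool" where
  "nice S le \<longleftrightarrow> (\<forall>x\<in>S. \<forall>y\<in>S. less le x y \<longrightarrow>
      \<not> ({z \<in> S. less le x z} \<subseteq> {z \<in> S. le y z})
    \<and> \<not> ({z \<in> S. less le z y} \<subseteq> {z \<in> S. le z x}))"

definition nice_section :: "'a set \<Rightarrow> ('a \<Rightarrow> 'a \<Rightarrow> bool) \<Rightarrow> bool" where
  "nice_section S le \<longleftrightarrow> is_section S le \<and> nice S le"

text \<open>Tower of nice sections: ordinal sum B_0 + ... + B_m of nice sections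
  (with the induced orders), i.e. every element of B_i is below every element of B_j, i<j.\<close>
definition tower :: "'a set \<Rightarrow> ('a \<Rightarrow> 'a \<Rightarrow> bool) \<Rightarrow> bool" where
  "tower S le \<longleftrightarrow> (\<exists>Bs :: 'a set list. S = \<Union> (set Bs)
     \<and> (\<forall>i<length Bs. nice_section (Bs ! i) le)
     \<and> (\<forall>i<length Bs. \<forall>j<length Bs. i < j \<longrightarrow> setless le (Bs ! i) (Bs ! j)))"

definition horizon :: "'a set \<Rightarrow> ('a \<Rightarrow> 'a \<Rightarrow> bool) \<Rightarrow> nat" where
  "horizon S le = (LEAST eta. \<forall>k. k + eta \<le> height S le \<longrightarrow>
                      setless le (level S le k) (level S le (k + eta)))"

definition frakN :: "nat \<Rightarrow> 'a set \<Rightarrow> ('a \<Rightarrow> 'a \<Rightarrow> bool) \<Rightarrow> bool" where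
  "frakN eta S le \<longleftrightarrow> nice_section S le \<and> height S le \<ge> 2 \<and> horizon S le = eta"

definition retract :: "'a set \<Rightarrow> 'a set \<Rightarrow> ('a \<Rightarrow> 'a \<Rightarrow> bool) \<Rightarrow> bool" where
  "retract R S le \<longleftrightarrow> (\<exists>f. (\<forall>x\<in>S. f x \<in> S)
     \<and> (\<forall>x\<in>S. \<forall>y\<in>S. le x y \<longrightarrow> le (f x) (f y))
     \<and> (\<forall>x\<in>S. f (f x) = f x) \<and> R = f ` S)"

end

theory Submission
  imports Defs
begin

text \<open>A section of height h \<ge> 1 is a grid of elements c k j (row k \<le> h, column j < 3) whose
  order is invariant under rotating the columns; its levels are its rows, so \<lambda> is the row
  index. The horizon \<eta> therefore gives u < w as soon as \<lambda> w \<ge> \<lambda> u + \<eta>, which bounds the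
  \<lambda>-spread of an antichain level by \<eta> - 1.

  For the equality case, a 3-element level of the tower R lies in a single block B, since
  distinct blocks are comparable. The column rotation of B extends to an automorphism of R,
  which preserves the levels of R, so the level is a whole row of B. If \<lambda> were not strictly
  increasing on x, y, z, the spread \<eta> - 1 would put one element of an adjacent row of B above
  (or below) all of that row; by the rotation symmetry the two rows are then completely
  comparable, which the definition of a section excludes.\<close>

section \<open>Level sets and rank functions\<close>

lemma rest_subset: "rest S le k \<subseteq> S"
  by (induct k) auto

lemma level_subset_rest: "level S le k \<subseteq> rest S le k"
  unfolding level_def minimals_def by blast

lemma level_subset: "level S le k \<subseteq> S"
  using level_subset_rest rest_subset by (rule order_trans)

lemma level_not_less: "a \<in> level S le k \<Longrightarrow> b \<in> level S le k \<Longrightarrow> \<not> less le a b"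
  unfolding level_def minimals_def by auto

lemma poset_subset: "poset S le \<Longrightarrow> R \<subseteq> S \<Longrightarrow> poset R le"
  unfolding poset_def by (meson finite_subset subsetD)

lemma poset_less_trans:
  "poset S le \<Longrightarrow> a \<in> S \<Longrightarrow> b \<in> S \<Longrightarrow> c \<in> S \<Longrightarrow> less le a b \<Longrightarrow> less le b c \<Longrightarrow> less le a c"
  unfolding poset_def less_def by metis

lemma poset_le_less_trans:
  "poset S le \<Longrightarrow> a \<in> S \<Longrightarrow> b \<in> S \<Longrightarrow> c \<in> S \<Longrightarrow> le a b \<Longrightarrow> less le b c \<Longrightarrow> less le a c"
  unfolding poset_def less_def by metis

lemma less_3_iff: "(j::nat) < 3 \<longleftrightarrow> j = 0 \<or> j = 1 \<or> j = 2"
  by arith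

lemma image_lessThan_3: "(f :: nat \<Rightarrow> 'a) ` {..<3} = {f 0, f 1, f 2}"
  by (auto simp: less_3_iff)

definition rank_function :: "('a \<Rightarrow> nat) \<Rightarrow> 'a set \<Rightarrow> ('a \<Rightarrow> 'a \<Rightarrow> bool) \<Rightarrow> bool" where
  "rank_function r S le \<longleftrightarrow> (\<forall>u\<in>S. \<forall>w\<in>S. less le u w \<longrightarrow> r u < r w)
     \<and> (\<forall>w\<in>S. \<forall>k<r w. \<exists>u\<in>S. r u = k \<and> less le u w)"

lemma minimals_rank_ge:
  assumes "rank_function r S le"
  shows "minimals {w \<in> S. k \<le> r w} le = {w \<in> S. r w = k}"
proof (intro equalityI subsetI)
  fix w assume w: "w \<in> minimals {w \<in> S. k \<le> r w} le"
  then have "\<not> k < r w" using assms unfolding rank_function_def minimals_def by fastforce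
  with w show "w \<in> {w \<in> S. r w = k}" unfolding minimals_def by simp
next
  fix w assume "w \<in> {w \<in> S. r w = k}"
  then show "w \<in> minimals {w \<in> S. k \<le> r w} le"
    using assms unfolding rank_function_def minimals_def by fastforce
qed

lemma rest_rank_function:
  assumes "rank_function r S le"
  shows "rest S le k = {w \<in> S. k \<le> r w}"
proof (induct k)
  case (Suc k)
  then show ?case using minimals_rank_ge[OF assms, of k] by auto
qed simp

lemma level_rank_function:
  assumes "rank_function r S le"
  shows "level S le k = {w \<in> S. r w = k}"
  unfolding level_def rest_rank_function[OF assms] by (rule minimals_rank_ge[OF assms])

lemma lam_rank_function:
  assumes "rank_function r S le" and "w \<in> S"
  shows "lam S le w = r w"
  unfolding lam_def level_rank_function[OF assms(1)] using assms(2) by simp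

section \<open>Grids\<close>

text \<open>The second alternative in the definition of a section, with the height abstracted to h.\<close>

definition grid :: "'a set \<Rightarrow> ('a \<Rightarrow> 'a \<Rightarrow> bool) \<Rightarrow> nat \<Rightarrow> (nat \<Rightarrow> nat \<Rightarrow> 'a) \<Rightarrow> bool" where
  "grid S le h c \<longleftrightarrow> poset S le
     \<and> inj_on (\<lambda>(k, j). c k j) ({..h} \<times> {..<3})
     \<and> S = (\<lambda>(k, j). c k j) ` ({..h} \<times> {..<3})
     \<and> (\<forall>j<3. \<forall>k<h. less le (c k j) (c (Suc k) j))
     \<and> (\<forall>k\<le>h. antichain {c k 0, c k 1, c k 2} le)
     \<and> (\<forall>k\<le>h. \<forall>l\<le>h. \<forall>i<3. \<forall>j<3.
          less le (c k i) (c l j) \<longrightarrow> less le (c k ((i + 1) mod 3)) (c l ((j + 1) mod 3)))"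

lemma grid_poset: "grid S le h c \<Longrightarrow> poset S le"
  unfolding grid_def by blast

lemma grid_mem: "grid S le h c \<Longrightarrow> k \<le> h \<Longrightarrow> j < 3 \<Longrightarrow> c k j \<in> S"
  unfolding grid_def by auto

lemma grid_memE:
  assumes "grid S le h c" and "w \<in> S"
  obtains k j where "w = c k j" and "k \<le> h" and "j < 3"
  using assms unfolding grid_def by auto

lemma grid_eq_iff:
  "grid S le h c \<Longrightarrow> k \<le> h \<Longrightarrow> j < 3 \<Longrightarrow> k' \<le> h \<Longrightarrow> j' < 3 \<Longrightarrow>
    c k j = c k' j' \<longleftrightarrow> k = k' \<and> j = j'"
  unfolding grid_def inj_on_def by auto

lemma grid_column_less:
  assumes grid: "grid S le h c" and "k < l" and "l \<le> h" and "j < 3"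
  shows "less le (c k j) (c l j)"
  using \<open>k < l\<close> \<open>l \<le> h\<close>
proof (induct l)
  case (Suc l)
  have step: "less le (c l j) (c (Suc l) j)"
    using grid Suc.prems \<open>j < 3\<close> unfolding grid_def by auto
  show ?case
  proof (cases "k = l")
    case False
    with Suc have "less le (c k j) (c l j)" by simp
    moreover have "c k j \<in> S" "c l j \<in> S" "c (Suc l) j \<in> S"
      using grid_mem[OF grid] Suc.prems \<open>j < 3\<close> by auto
    ultimately show ?thesis using poset_less_trans[OF grid_poset[OF grid]] step by blast
  qed (use step in simp)
qed simp

lemma grid_less_imp_row_less:
  assumes grid: "grid S le h c" and "k \<le> h" and "l \<le> h" and "i < 3" and "j < 3"
    and less: "less le (c k i) (c l j)"
  shows "k < l"
proof (rule ccontr)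
  assume "\<not> k < l"
  have "le (c l i) (c k i)"
  proof (cases "l = k")
    case True
    then show ?thesis
      using grid_poset[OF grid] grid_mem[OF grid] assms(2,4) unfolding poset_def by auto
  next
    case False
    with \<open>\<not> k < l\<close> have "l < k" by simp
    then show ?thesis
      using grid_column_less[OF grid _ \<open>k \<le> h\<close> \<open>i < 3\<close>] unfolding less_def by simp
  qed
  then have "less le (c l i) (c l j)"
    using poset_le_less_trans[OF grid_poset[OF grid]] grid_mem[OF grid] assms by blast
  moreover have "antichain (c l ` {..<3}) le"
    using grid \<open>l \<le> h\<close> unfolding grid_def image_lessThan_3 by blast
  ultimately show False
    using \<open>i < 3\<close> \<open>j < 3\<close> unfolding antichain_def less_def by blast
qed

lemma grid_shift:
  assumes grid: "grid S le h c" and "k \<le> h" and "l \<le> h" and "i < 3" and "j < 3"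
    and "less le (c k i) (c l j)"
  shows "less le (c k ((i + d) mod 3)) (c l ((j + d) mod 3))"
proof (induct d)
  case (Suc d)
  then have "less le (c k (((i + d) mod 3 + 1) mod 3)) (c l (((j + d) mod 3 + 1) mod 3))"
    using grid assms(2,3) unfolding grid_def by auto
  then show ?case by (simp add: mod_Suc_eq)
qed (use assms in simp)

lemma grid_shift_iff:
  assumes grid: "grid S le h c" and "k \<le> h" and "l \<le> h" and "i < 3" and "j < 3"
  shows "less le (c k ((i + d) mod 3)) (c l ((j + d) mod 3)) \<longleftrightarrow> less le (c k i) (c l j)"
proof
  assume "less le (c k ((i + d) mod 3)) (c l ((j + d) mod 3))"
  \<comment> \<open>shifting by another 2 d columns returns to the start\<close>
  from grid_shift[OF grid assms(2,3) _ _ this, of "2 * d"]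
  show "less le (c k i) (c l j)"
    using assms(4,5) by (simp add: mod_add_left_eq)
qed (rule grid_shift[OF assms])

lemma grid_rank_function:
  assumes grid: "grid S le h c"
  obtains r where "rank_function r S le" and "\<And>k j. k \<le> h \<Longrightarrow> j < 3 \<Longrightarrow> r (c k j) = k"
proof
  let ?r = "\<lambda>w. fst (the_inv_into ({..h} \<times> {..<3}) (\<lambda>(k, j). c k j) w)"
  show r: "?r (c k j) = k" if "k \<le> h" "j < 3" for k j
    using the_inv_into_f_f[of "\<lambda>(k, j). c k j" "{..h} \<times> {..<3}" "(k, j)"] grid that
    unfolding grid_def by simp
  have "?r u < ?r w" if "u \<in> S" "w \<in> S" "less le u w" for u w
  proof -
    obtain k i where "u = c k i" "k \<le> h" "i < 3" using grid_memE[OF grid \<open>u \<in> S\<close>] .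
    moreover obtain l j where "w = c l j" "l \<le> h" "j < 3" using grid_memE[OF grid \<open>w \<in> S\<close>] .
    ultimately show ?thesis using r grid_less_imp_row_less[OF grid] \<open>less le u w\<close> by simp
  qed
  moreover have "\<exists>u\<in>S. ?r u = k \<and> less le u w" if "w \<in> S" "k < ?r w" for w k
  proof -
    obtain l j where "w = c l j" "l \<le> h" "j < 3" using grid_memE[OF grid \<open>w \<in> S\<close>] .
    with \<open>k < ?r w\<close> show ?thesis
      using r grid_mem[OF grid] grid_column_less[OF grid] by (intro bexI[of _ "c k j"]) auto
  qed
  ultimately show "rank_function ?r S le" unfolding rank_function_def by blast
qed

lemma grid_lam:
  assumes "grid S le h c" and "k \<le> h" and "j < 3"
  shows "lam S le (c k j) = k"
proof -
  obtain r where rank: "rank_function r S le" and r: "\<And>k j. k \<le> h \<Longrightarrow> j < 3 \<Longrightarrow> r (c k j) = k"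
    using grid_rank_function[OF assms(1)] by blast
  show ?thesis using lam_rank_function[OF rank grid_mem[OF assms]] r assms(2,3) by simp
qed

lemma grid_level:
  assumes grid: "grid S le h c" and "k \<le> h"
  shows "level S le k = c k ` {..<3}"
proof -
  obtain r where "rank_function r S le" and r: "\<And>k j. k \<le> h \<Longrightarrow> j < 3 \<Longrightarrow> r (c k j) = k"
    using grid_rank_function[OF grid] by blast
  then have "level S le k = {w \<in> S. r w = k}" by (simp add: level_rank_function)
  also have "\<dots> = c k ` {..<3}"
    using r grid_mem[OF grid] \<open>k \<le> h\<close> by (auto elim: grid_memE[OF grid])
  finally show ?thesis .
qed

lemma grid_row_card: "grid S le h c \<Longrightarrow> k \<le> h \<Longrightarrow> card (c k ` {..<3}) = 3"
  by (subst card_image) (auto simp: inj_on_def grid_eq_iff)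

lemma grid_less_lam_less:
  assumes grid: "grid S le h c" and "u \<in> S" and "w \<in> S" and "less le u w"
  shows "lam S le u < lam S le w"
proof -
  obtain k i where "u = c k i" "k \<le> h" "i < 3" using grid_memE[OF grid \<open>u \<in> S\<close>] .
  moreover obtain l j where "w = c l j" "l \<le> h" "j < 3" using grid_memE[OF grid \<open>w \<in> S\<close>] .
  ultimately show ?thesis
    using grid_lam[OF grid] grid_less_imp_row_less[OF grid] \<open>less le u w\<close> by simp
qed

lemma grid_far_less:
  assumes grid: "grid S le h c"
    and far: "\<forall>k. k + eta \<le> h \<longrightarrow> setless le (level S le k) (level S le (k + eta))"
    and "u \<in> S" and "w \<in> S" and lam: "lam S le u + eta \<le> lam S le w"
  shows "less le u w"
proof -
  obtain k i where u: "u = c k i" "k \<le> h" "i < 3" using grid_memE[OF grid \<open>u \<in> S\<close>] .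
  obtain l j where w: "w = c l j" "l \<le> h" "j < 3" using grid_memE[OF grid \<open>w \<in> S\<close>] .
  have kl: "k + eta \<le> l" using lam u w grid_lam[OF grid] by simp
  then have less: "less le u (c (k + eta) j)"
    using far grid_level[OF grid] u w unfolding setless_def by auto
  show ?thesis
  proof (cases "k + eta = l")
    case False
    with kl have "less le (c (k + eta) j) w" using grid_column_less[OF grid _ w(2,3)] w(1) by simp
    moreover have "c (k + eta) j \<in> S" using grid_mem[OF grid] kl w(2,3) by simp
    ultimately show ?thesis
      using less poset_less_trans[OF grid_poset[OF grid]] \<open>u \<in> S\<close> \<open>w \<in> S\<close> by blast
  qed (use less w in simp)
qed

lemma grid_setless_rows_of_above:
  assumes grid: "grid S le h c" and "k \<le> h" and "l \<le> h" and "i < 3"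
    and above: "\<forall>a \<in> c k ` {..<3}. less le a (c l i)"
  shows "setless le (c k ` {..<3}) (c l ` {..<3})"
  unfolding setless_def
proof (intro ballI)
  fix a b assume "a \<in> c k ` {..<3}" "b \<in> c l ` {..<3}"
  then obtain j j' where a: "a = c k j" "j < 3" and b: "b = c l j'" "j' < 3" by auto
  define d where "d = i + 3 - j'"
  have "(j' + d) mod 3 = i" using \<open>i < 3\<close> \<open>j' < 3\<close> by (simp add: d_def)
  moreover have "(j + d) mod 3 < 3" by simp
  ultimately have "less le (c k ((j + d) mod 3)) (c l ((j' + d) mod 3))" using above by simp
  then show "less le a b" using grid_shift_iff[OF grid assms(2,3)] a b by simp
qed

lemma grid_setless_rows_of_below:
  assumes grid: "grid S le h c" and "k \<le> h" and "l \<le> h" and "i < 3"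
    and below: "\<forall>b \<in> c l ` {..<3}. less le (c k i) b"
  shows "setless le (c k ` {..<3}) (c l ` {..<3})"
  unfolding setless_def
proof (intro ballI)
  fix a b assume "a \<in> c k ` {..<3}" "b \<in> c l ` {..<3}"
  then obtain j j' where a: "a = c k j" "j < 3" and b: "b = c l j'" "j' < 3" by auto
  define d where "d = i + 3 - j"
  have "(j + d) mod 3 = i" using \<open>i < 3\<close> \<open>j < 3\<close> by (simp add: d_def)
  moreover have "(j' + d) mod 3 < 3" by simp
  ultimately have "less le (c k ((j + d) mod 3)) (c l ((j' + d) mod 3))" using below by simp
  then show "less le a b" using grid_shift_iff[OF grid assms(2,3)] a b by simp
qed

lemma height_le_card:
  assumes "finite S"
  shows "height S le \<le> card S - 1"
proof -
  let ?lengths = "{card C - 1 | C. is_chain S le C}"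
  have "?lengths \<subseteq> (\<lambda>C. card C - 1) ` Pow S" unfolding is_chain_def by auto
  then have "finite ?lengths" by (rule finite_subset) (simp add: assms)
  moreover have "is_chain S le {}" unfolding is_chain_def by simp
  moreover have "card C - 1 \<le> card S - 1" if "is_chain S le C" for C
    using that card_mono[OF assms] unfolding is_chain_def by (simp add: diff_le_mono)
  ultimately show ?thesis unfolding height_def by (subst Max_le_iff) auto
qed

lemma section_grid:
  assumes "is_section S le" and "card S \<noteq> 2"
  obtains c where "grid S le (height S le) c" and "1 \<le> height S le"
    and "\<forall>k. k + 1 \<le> height S le \<longrightarrow> \<not> setless le (c k ` {..<3}) (c (k + 1) ` {..<3})"
proof -
  have "\<exists>c. grid S le (height S le) c \<and> 1 \<le> height S le
     \<and> \<not> (\<exists>k. card (level S le k) = 3 \<and> card (level S le (k + 1)) = 3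
                         \<and> setless le (level S le k) (level S le (k + 1)))"
    using assms unfolding is_section_def grid_def by blast
  then obtain c where grid: "grid S le (height S le) c" and "1 \<le> height S le"
    and no_full: "\<not> (\<exists>k. card (level S le k) = 3 \<and> card (level S le (k + 1)) = 3
                         \<and> setless le (level S le k) (level S le (k + 1)))"
    by blast
  moreover have "\<not> setless le (c k ` {..<3}) (c (k + 1) ` {..<3})" if "k + 1 \<le> height S le" for k
  proof
    assume "setless le (c k ` {..<3}) (c (k + 1) ` {..<3})"
    moreover have "card (c k ` {..<3}) = 3" "card (c (k + 1) ` {..<3}) = 3"
      using grid_row_card[OF grid] that by simp_all
    ultimately have "card (level S le k) = 3 \<and> card (level S le (k + 1)) = 3
                         \<and> setless le (level S le k) (level S le (k + 1))"
      using grid_level[OF grid, of k] grid_level[OF grid, of "k + 1"] that by simp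
    with no_full show False by blast
  qed
  ultimately show thesis using that by blast
qed

lemma horizon_setless:
  "\<forall>k. k + horizon S le \<le> height S le \<longrightarrow> setless le (level S le k) (level S le (k + horizon S le))"
  unfolding horizon_def by (rule LeastI[of _ "Suc (height S le)"]) simp

lemma frakN_poset: "frakN eta S le \<Longrightarrow> poset S le"
  unfolding frakN_def nice_section_def is_section_def by simp

lemma frakN_grid:
  assumes "frakN eta S le"
  obtains c where "grid S le (height S le) c"
proof -
  have sec: "is_section S le" and "2 \<le> height S le"
    using assms unfolding frakN_def nice_section_def by auto
  have "finite S" using frakN_poset[OF assms] unfolding poset_def by simp
  then have "card S \<noteq> 2" using height_le_card[of S le] \<open>2 \<le> height S le\<close> by auto
  with sec show thesis using section_grid that by blast
qed

lemma frakN_less_lam_less: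
  "frakN eta S le \<Longrightarrow> u \<in> S \<Longrightarrow> w \<in> S \<Longrightarrow> less le u w \<Longrightarrow> lam S le u < lam S le w"
  by (metis frakN_grid grid_less_lam_less)

lemma frakN_far_less:
  assumes "frakN eta S le" and "u \<in> S" and "w \<in> S" and "lam S le u + eta \<le> lam S le w"
  shows "less le u w"
proof -
  obtain c where grid: "grid S le (height S le) c" using frakN_grid[OF assms(1)] .
  have "horizon S le = eta" using assms(1) unfolding frakN_def by simp
  then show ?thesis using grid_far_less[OF grid horizon_setless] assms(2-4) by simp
qed

lemma retract_subset: "retract R S le \<Longrightarrow> R \<subseteq> S"
  unfolding retract_def by auto

section \<open>Order automorphisms preserve levels\<close>

lemma minimals_image:
  assumes "inj_on \<phi> S" and "\<forall>a\<in>S. \<forall>b\<in>S. le (\<phi> a) (\<phi> b) \<longleftrightarrow> le a b" and "T \<subseteq> S"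
  shows "\<phi> ` minimals T le = minimals (\<phi> ` T) le"
proof -
  have "less le (\<phi> a) (\<phi> b) \<longleftrightarrow> less le a b" if "a \<in> T" "b \<in> T" for a b
    using assms that unfolding less_def inj_on_def by blast
  then show ?thesis
    unfolding minimals_def using \<open>T \<subseteq> S\<close> by (intro equalityI subsetI) auto
qed

lemma rest_automorphism:
  assumes bij: "bij_betw \<phi> S S" and ord: "\<forall>a\<in>S. \<forall>b\<in>S. le (\<phi> a) (\<phi> b) \<longleftrightarrow> le a b"
  shows "\<phi> ` rest S le k = rest S le k"
proof (induct k)
  case 0
  then show ?case using bij by (simp add: bij_betw_def)
next
  case (Suc k)
  have inj: "inj_on \<phi> S" using bij by (simp add: bij_betw_def)
  have min: "minimals (rest S le k) le \<subseteq> S" using rest_subset[of S le k] unfolding minimals_def by blast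
  have "\<phi> ` rest S le (Suc k) = \<phi> ` rest S le k - \<phi> ` minimals (rest S le k) le"
    using inj_on_image_set_diff[OF inj _ min, of "rest S le k"] rest_subset[of S le k] by auto
  also have "\<dots> = rest S le (Suc k)"
    using minimals_image[OF inj ord rest_subset] Suc by simp
  finally show ?case .
qed

lemma level_automorphism:
  assumes "bij_betw \<phi> S S" and "\<forall>a\<in>S. \<forall>b\<in>S. le (\<phi> a) (\<phi> b) \<longleftrightarrow> le a b"
  shows "\<phi> ` level S le k = level S le k"
  unfolding level_def
  using minimals_image[OF bij_betw_imp_inj_on[OF assms(1)] assms(2) rest_subset]
    rest_automorphism[OF assms] by simp

lemma grid_rotation:
  assumes grid: "grid B le h c"
  obtains \<psi> where "bij_betw \<psi> B B" and "\<forall>a\<in>B. \<forall>b\<in>B. le (\<psi> a) (\<psi> b) \<longleftrightarrow> le a b"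
    and "\<forall>k\<le>h. \<forall>j<3. \<psi> (c k j) = c k ((j + 1) mod 3)"
proof -
  let ?D = "{..h} \<times> {..<3::nat}" and ?C = "\<lambda>(k, j). c k j"
  let ?rot = "\<lambda>(k, j). (k, (j + 1) mod 3)"
  let ?\<psi> = "?C \<circ> (?rot \<circ> the_inv_into ?D ?C)"
  have C: "bij_betw ?C ?D B" using grid unfolding grid_def bij_betw_def by (elim conjE) simp
  have rot: "bij_betw ?rot ?D ?D"
    by (rule bij_betw_byWitness[where f' = "\<lambda>(k, j). (k, (j + 2) mod 3)"]) (auto simp: less_3_iff)
  have bij: "bij_betw ?\<psi> B B"
    by (rule bij_betw_trans[OF bij_betw_trans[OF bij_betw_the_inv_into[OF C] rot] C])
  have \<psi>: "?\<psi> (c k j) = c k ((j + 1) mod 3)" if "k \<le> h" "j < 3" for k j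
    using the_inv_into_f_f[OF bij_betw_imp_inj_on[OF C], of "(k, j)"] that by simp
  have "le (?\<psi> a) (?\<psi> b) \<longleftrightarrow> le a b" if "a \<in> B" "b \<in> B" for a b
  proof -
    obtain k i where a: "a = c k i" "k \<le> h" "i < 3" using grid_memE[OF grid \<open>a \<in> B\<close>] .
    obtain l j where b: "b = c l j" "l \<le> h" "j < 3" using grid_memE[OF grid \<open>b \<in> B\<close>] .
    have "(i + 1) mod 3 = (j + 1) mod 3 \<longleftrightarrow> i = j" using a(3) b(3) by (auto simp: less_3_iff)
    then have "?\<psi> a = ?\<psi> b \<longleftrightarrow> a = b" using a b \<psi> grid_eq_iff[OF grid] by simp
    moreover have "less le (?\<psi> a) (?\<psi> b) \<longleftrightarrow> less le a b"
      using a b \<psi> grid_shift_iff[OF grid a(2) b(2) a(3) b(3), of 1] by simp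
    moreover have "le w w" if "w \<in> B" for w
      using grid_poset[OF grid] that unfolding poset_def by blast
    ultimately show ?thesis
      using bij_betwE[OF bij] \<open>a \<in> B\<close> \<open>b \<in> B\<close> unfolding less_def by blast
  qed
  with bij \<psi> that show thesis by blast
qed

section \<open>Towers\<close>

definition ordinal_sum :: "'a set \<Rightarrow> ('a \<Rightarrow> 'a \<Rightarrow> bool) \<Rightarrow> 'a set list \<Rightarrow> bool" where
  "ordinal_sum R le Bs \<longleftrightarrow> R = \<Union> (set Bs)
     \<and> (\<forall>i<length Bs. \<forall>j<length Bs. i < j \<longrightarrow> setless le (Bs ! i) (Bs ! j))"

lemma tower_ordinal_sum:
  assumes "tower R le"
  obtains Bs where "ordinal_sum R le Bs" and "\<forall>i<length Bs. is_section (Bs ! i) le"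
  using assms unfolding tower_def ordinal_sum_def nice_section_def by blast

lemma ordinal_sum_memE:
  assumes "ordinal_sum R le Bs" and "a \<in> R"
  obtains i where "i < length Bs" and "a \<in> Bs ! i"
  using assms unfolding ordinal_sum_def by (auto simp: in_set_conv_nth)

lemma ordinal_sum_block_subset: "ordinal_sum R le Bs \<Longrightarrow> i < length Bs \<Longrightarrow> Bs ! i \<subseteq> R"
  unfolding ordinal_sum_def by auto

lemma ordinal_sum_less_across_blocks:
  assumes "ordinal_sum R le Bs" and "i < length Bs" and "t < length Bs" and "i < t"
    and "a \<in> Bs ! i" and "b \<in> Bs ! t"
  shows "less le a b"
  using assms unfolding ordinal_sum_def setless_def by blast

lemma ordinal_sum_le_across_blocks:
  assumes sum: "ordinal_sum R le Bs" and "poset R le"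
    and "i < length Bs" and "t < length Bs" and "i \<noteq> t" and "a \<in> Bs ! i" and "b \<in> Bs ! t"
  shows "le a b \<longleftrightarrow> i < t"
proof (cases "i < t")
  case True
  then show ?thesis using ordinal_sum_less_across_blocks[OF sum] assms(3-7) unfolding less_def by blast
next
  case False
  with \<open>i \<noteq> t\<close> have "less le b a"
    using ordinal_sum_less_across_blocks[OF sum assms(4,3) _ assms(7,6)] by simp
  moreover have "a \<in> R" "b \<in> R" using ordinal_sum_block_subset[OF sum] assms(3,4,6,7) by auto
  ultimately show ?thesis using \<open>poset R le\<close> False unfolding poset_def less_def by blast
qed

lemma ordinal_sum_extend_automorphism:
  assumes sum: "ordinal_sum R le Bs" and "poset R le" and i: "i < length Bs"
    and bij: "bij_betw \<psi> (Bs ! i) (Bs ! i)"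
    and ord: "\<forall>a\<in>Bs ! i. \<forall>b\<in>Bs ! i. le (\<psi> a) (\<psi> b) \<longleftrightarrow> le a b"
  obtains \<sigma> where "bij_betw \<sigma> R R" and "\<forall>a\<in>R. \<forall>b\<in>R. le (\<sigma> a) (\<sigma> b) \<longleftrightarrow> le a b"
    and "\<forall>w\<in>Bs ! i. \<sigma> w = \<psi> w"
proof -
  let ?B = "Bs ! i"
  let ?\<sigma> = "\<lambda>w. if w \<in> ?B then \<psi> w else w"
  have B: "?B \<subseteq> R" using ordinal_sum_block_subset[OF sum i] .
  have "bij_betw ?\<sigma> ?B ?B" using bij by (rule bij_betw_cong[THEN iffD1, rotated]) simp
  moreover have "bij_betw ?\<sigma> (R - ?B) (R - ?B)" by (rule bij_betw_cong[THEN iffD2, OF _ bij_betw_id]) simp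
  ultimately have "bij_betw ?\<sigma> (?B \<union> (R - ?B)) (?B \<union> (R - ?B))" by (rule bij_betw_combine) blast
  then have "bij_betw ?\<sigma> R R" using B by (simp add: Un_absorb1)
  moreover
  have outside: "(le a b \<longleftrightarrow> le a' b) \<and> (le b a \<longleftrightarrow> le b a')"
    if a: "a \<in> ?B" "a' \<in> ?B" and b: "b \<in> R - ?B" for a a' b
  proof -
    obtain t where t: "t < length Bs" "b \<in> Bs ! t" using ordinal_sum_memE[OF sum] b by blast
    with b have "t \<noteq> i" by blast
    then show ?thesis
      using ordinal_sum_le_across_blocks[OF sum \<open>poset R le\<close>] i t a by (metis less_irrefl)
  qed
  have "le (?\<sigma> a) (?\<sigma> b) \<longleftrightarrow> le a b" if "a \<in> R" "b \<in> R" for a b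
  proof (cases "a \<in> ?B"; cases "b \<in> ?B")
    assume "a \<in> ?B" "b \<in> ?B"
    then show ?thesis using ord by simp
  next
    assume "a \<in> ?B" "b \<notin> ?B"
    then show ?thesis using outside[of a "\<psi> a" b] bij_betwE[OF bij] that by simp
  next
    assume "a \<notin> ?B" "b \<in> ?B"
    then show ?thesis using outside[of b "\<psi> b" a] bij_betwE[OF bij] that by simp
  qed simp
  ultimately show thesis using that by auto
qed

lemma ordinal_sum_level_in_block:
  assumes sum: "ordinal_sum R le Bs" and "i < length Bs" and "x \<in> Bs ! i"
    and "x \<in> level R le l" and "w \<in> level R le l"
  shows "w \<in> Bs ! i"
proof (rule ccontr)
  assume "w \<notin> Bs ! i"
  obtain t where "t < length Bs" "w \<in> Bs ! t"
    using ordinal_sum_memE[OF sum] level_subset[of R le l] assms(5) by blast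
  with \<open>w \<notin> Bs ! i\<close> have "less le x w \<or> less le w x"
    using ordinal_sum_less_across_blocks[OF sum] assms(2,3) by (metis linorder_neqE_nat)
  then show False using level_not_less[OF assms(4,5)] level_not_less[OF assms(5,4)] by blast
qed

lemma ordinal_sum_level_row_closed:
  assumes sum: "ordinal_sum R le Bs" and "poset R le" and i: "i < length Bs"
    and grid: "grid (Bs ! i) le h c" and "k \<le> h" and "j < 3" and "j' < 3"
    and "c k j \<in> level R le l"
  shows "c k j' \<in> level R le l"
proof -
  obtain \<psi> where "bij_betw \<psi> (Bs ! i) (Bs ! i)"
    and "\<forall>a\<in>Bs ! i. \<forall>b\<in>Bs ! i. le (\<psi> a) (\<psi> b) \<longleftrightarrow> le a b"
    and \<psi>: "\<forall>k\<le>h. \<forall>j<3. \<psi> (c k j) = c k ((j + 1) mod 3)"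
    using grid_rotation[OF grid] by blast
  then obtain \<sigma> where bij: "bij_betw \<sigma> R R" and ord: "\<forall>a\<in>R. \<forall>b\<in>R. le (\<sigma> a) (\<sigma> b) \<longleftrightarrow> le a b"
    and \<sigma>: "\<forall>w\<in>Bs ! i. \<sigma> w = \<psi> w"
    using ordinal_sum_extend_automorphism[OF sum \<open>poset R le\<close> i] by blast
  have level_fixed: "\<sigma> ` level R le l = level R le l" by (rule level_automorphism[OF bij ord])
  have "c k ((j + n) mod 3) \<in> level R le l" for n
  proof (induct n)
    case (Suc n)
    then have "\<sigma> (c k ((j + n) mod 3)) \<in> level R le l" using level_fixed by blast
    moreover have "\<sigma> (c k ((j + n) mod 3)) = c k ((j + Suc n) mod 3)"
      using \<sigma> \<psi> grid_mem[OF grid] \<open>k \<le> h\<close> by (simp add: mod_Suc_eq)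
    ultimately show ?case by simp
  qed (use assms in simp)
  from this[of "j' + 3 - j"] show ?thesis using \<open>j < 3\<close> \<open>j' < 3\<close> by simp
qed

lemma ordinal_sum_level_single_row:
  assumes sum: "ordinal_sum R le Bs" and "poset R le" and i: "i < length Bs"
    and grid: "grid (Bs ! i) le h c"
    and "k \<le> h" and "j < 3" and "c k j \<in> level R le l"
    and "k' \<le> h" and "j' < 3" and "c k' j' \<in> level R le l"
  shows "k = k'"
proof -
  have "\<not> k < k'" if "k \<le> h" "j < 3" "c k j \<in> level R le l"
    and "k' \<le> h" "j' < 3" "c k' j' \<in> level R le l" for k j k' j'
  proof
    assume "k < k'"
    then have "less le (c k j') (c k' j')" using grid_column_less[OF grid] that by blast
    moreover have "c k j' \<in> level R le l"
      using ordinal_sum_level_row_closed[OF sum \<open>poset R le\<close> i grid] that by blast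
    ultimately show False using level_not_less[OF _ that(6)] by blast
  qed
  with assms(5-10) show ?thesis by (meson linorder_neqE_nat)
qed

lemma tower_large_level_is_row:
  assumes "tower R le" and "poset R le" and "2 < card (level R le l)"
  obtains B h c m where "B \<subseteq> R" and "grid B le h c" and "1 \<le> h"
    and "\<forall>k. k + 1 \<le> h \<longrightarrow> \<not> setless le (c k ` {..<3}) (c (k + 1) ` {..<3})"
    and "m \<le> h" and "level R le l = c m ` {..<3}"
proof -
  obtain Bs where sum: "ordinal_sum R le Bs" and sections: "\<forall>i<length Bs. is_section (Bs ! i) le"
    using tower_ordinal_sum[OF assms(1)] by blast
  obtain x where x: "x \<in> level R le l" using assms(3) by (metis all_not_in_conv card.empty not_less_zero)
  then obtain i where i: "i < length Bs" "x \<in> Bs ! i"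
    using ordinal_sum_memE[OF sum] level_subset[of R le l] by blast
  have level_in_block: "level R le l \<subseteq> Bs ! i"
    using ordinal_sum_level_in_block[OF sum i x] by blast
  have "finite (Bs ! i)"
    using assms(2) ordinal_sum_block_subset[OF sum i(1)] unfolding poset_def by (blast intro: finite_subset)
  then have "card (Bs ! i) \<noteq> 2" using card_mono[OF _ level_in_block] assms(3) by simp
  then obtain h c where grid: "grid (Bs ! i) le h c" and "1 \<le> h"
    and no_full: "\<forall>k. k + 1 \<le> h \<longrightarrow> \<not> setless le (c k ` {..<3}) (c (k + 1) ` {..<3})"
    using section_grid sections i(1) by metis
  obtain m j where m: "x = c m j" "m \<le> h" "j < 3" using grid_memE[OF grid i(2)] .
  have "level R le l = c m ` {..<3}"
  proof (intro equalityI subsetI)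
    fix w assume w: "w \<in> level R le l"
    then obtain k j' where "w = c k j'" "k \<le> h" "j' < 3" using grid_memE[OF grid] level_in_block by blast
    moreover from this have "k = m"
      using ordinal_sum_level_single_row[OF sum assms(2) i(1) grid] m x w by metis
    ultimately show "w \<in> c m ` {..<3}" by simp
  next
    fix w assume "w \<in> c m ` {..<3}"
    then show "w \<in> level R le l"
      using ordinal_sum_level_row_closed[OF sum assms(2) i(1) grid m(2,3)] m x by auto
  qed
  then show thesis using that ordinal_sum_block_subset[OF sum i(1)] grid \<open>1 \<le> h\<close> no_full m(2) by blast
qed

section \<open>Three-element levels of a tower\<close>

lemma grid_row_strictly_spread_up:
  fixes f :: "'a \<Rightarrow> nat"
  assumes grid: "grid B le h c" and up: "m + 1 \<le> h"
    and no_full: "\<not> setless le (c m ` {..<3}) (c (m + 1) ` {..<3})"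
    and row: "c m ` {..<3} = {x, y, z}"
    and rank_less: "\<forall>u\<in>B. \<forall>w\<in>B. less le u w \<longrightarrow> f u < f w"
    and far: "\<forall>u\<in>B. \<forall>w\<in>B. f u + eta \<le> f w \<longrightarrow> less le u w"
    and "f x \<le> f y" and "f y \<le> f z" and spread: "f x + eta = f z + 1"
  shows "f x < f y \<and> f y < f z"
proof -
  have mem: "c k j \<in> B" if "k \<le> h" "j < 3" for k j using grid_mem[OF grid] that .
  have column: "less le (c m j) (c (m + 1) j) \<and> f (c m j) < f (c (m + 1) j)" if "j < 3" for j
    using grid_column_less[OF grid _ up that] rank_less mem up that by simp
  have "c m ` {..<3} \<subseteq> B" using mem up by auto
  then have xyz: "x \<in> B" "y \<in> B" "z \<in> B" unfolding row by simp_all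
  have "x \<in> c m ` {..<3}" "z \<in> c m ` {..<3}" using row by simp_all
  then obtain jx jz where x: "x = c m jx" "jx < 3" and z: "z = c m jz" "jz < 3" by blast
  have "f x \<noteq> f y"
  proof
    assume "f x = f y"
    let ?w = "c (m + 1) jz"
    have "f z < f ?w" using column z by simp
    then have "f x + eta \<le> f ?w" and "f y + eta \<le> f ?w" using \<open>f x = f y\<close> spread by auto
    then have "less le x ?w" and "less le y ?w" using far xyz mem[OF up z(2)] by auto
    moreover have "less le z ?w" using column z by simp
    ultimately have "\<forall>a \<in> c m ` {..<3}. less le a ?w" unfolding row by blast
    with no_full show False using grid_setless_rows_of_above[OF grid _ up z(2)] up by simp
  qed
  moreover have "f y \<noteq> f z"
  proof
    assume "f y = f z"
    have "less le x b" if b_row: "b \<in> c (m + 1) ` {..<3}" for b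
    proof -
      obtain j where b: "b = c (m + 1) j" "j < 3" using b_row by blast
      have "c m j \<in> {x, y, z}" using row b(2) by blast
      moreover have "f y < f b" if "c m j \<in> {y, z}" using that column[OF b(2)] b(1) \<open>f y = f z\<close> by auto
      ultimately show ?thesis
        using column[OF b(2)] b(1) \<open>f x \<le> f y\<close> \<open>f y = f z\<close> spread xyz far mem[OF up b(2)] by auto
    qed
    with no_full show False using grid_setless_rows_of_below[OF grid _ up x(2)] x(1) up by simp
  qed
  ultimately show ?thesis using assms(7,8) by simp
qed

lemma grid_row_strictly_spread_down:
  fixes f :: "'a \<Rightarrow> nat"
  assumes grid: "grid B le h c" and down: "m + 1 \<le> h"
    and no_full: "\<not> setless le (c m ` {..<3}) (c (m + 1) ` {..<3})"
    and row: "c (m + 1) ` {..<3} = {x, y, z}"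
    and rank_less: "\<forall>u\<in>B. \<forall>w\<in>B. less le u w \<longrightarrow> f u < f w"
    and far: "\<forall>u\<in>B. \<forall>w\<in>B. f u + eta \<le> f w \<longrightarrow> less le u w"
    and "f x \<le> f y" and "f y \<le> f z" and spread: "f x + eta = f z + 1"
  shows "f x < f y \<and> f y < f z"
proof -
  have mem: "c k j \<in> B" if "k \<le> h" "j < 3" for k j using grid_mem[OF grid] that .
  have column: "less le (c m j) (c (m + 1) j) \<and> f (c m j) < f (c (m + 1) j)" if "j < 3" for j
    using grid_column_less[OF grid _ down that] rank_less mem down that by simp
  have "c (m + 1) ` {..<3} \<subseteq> B" using mem down by auto
  then have xyz: "x \<in> B" "y \<in> B" "z \<in> B" unfolding row by simp_all
  have "x \<in> c (m + 1) ` {..<3}" "z \<in> c (m + 1) ` {..<3}" using row by simp_all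
  then obtain jx jz where x: "x = c (m + 1) jx" "jx < 3" and z: "z = c (m + 1) jz" "jz < 3" by blast
  have "f x \<noteq> f y"
  proof
    assume "f x = f y"
    have "less le a z" if a_row: "a \<in> c m ` {..<3}" for a
    proof -
      obtain j where a: "a = c m j" "j < 3" using a_row by blast
      have "c (m + 1) j \<in> {x, y, z}" using row a(2) by blast
      moreover have "f a < f x" if "c (m + 1) j \<in> {x, y}" using that column[OF a(2)] a(1) \<open>f x = f y\<close> by auto
      ultimately show ?thesis
        using column[OF a(2)] a(1) \<open>f x = f y\<close> spread xyz far mem[OF _ a(2)] down by auto
    qed
    with no_full show False using grid_setless_rows_of_above[OF grid _ down z(2)] z(1) down by simp
  qed
  moreover have "f y \<noteq> f z"
  proof
    assume "f y = f z"
    let ?u = "c m jx"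
    have "f ?u < f x" using column x by simp
    then have "f ?u + eta \<le> f y" and "f ?u + eta \<le> f z" using \<open>f y = f z\<close> spread by auto
    then have "less le ?u y" and "less le ?u z" using far xyz mem[OF _ x(2)] down by auto
    moreover have "less le ?u x" using column x by simp
    ultimately have "\<forall>b \<in> c (m + 1) ` {..<3}. less le ?u b" unfolding row by blast
    with no_full show False using grid_setless_rows_of_below[OF grid _ down x(2)] down by simp
  qed
  ultimately show ?thesis using assms(7,8) by simp
qed

lemma grid_row_strictly_spread:
  fixes f :: "'a \<Rightarrow> nat"
  assumes grid: "grid B le h c" and "1 \<le> h"
    and no_full: "\<forall>k. k + 1 \<le> h \<longrightarrow> \<not> setless le (c k ` {..<3}) (c (k + 1) ` {..<3})"
    and "m \<le> h" and row: "c m ` {..<3} = {x, y, z}"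
    and "\<forall>u\<in>B. \<forall>w\<in>B. less le u w \<longrightarrow> f u < f w"
    and "\<forall>u\<in>B. \<forall>w\<in>B. f u + eta \<le> f w \<longrightarrow> less le u w"
    and "f x \<le> f y" and "f y \<le> f z" and "f x + eta = f z + 1"
  shows "f x < f y \<and> f y < f z"
proof (cases "m + 1 \<le> h")
  case True
  then show ?thesis using grid_row_strictly_spread_up[OF grid _ _ row] no_full assms(6-) by blast
next
  case False
  with \<open>1 \<le> h\<close> obtain m' where "m = m' + 1" by (cases m) auto
  with \<open>m \<le> h\<close> show ?thesis using grid_row_strictly_spread_down[OF grid] no_full row assms(6-) by blast
qed

lemma tower_level_strictly_spread:
  fixes f :: "'a \<Rightarrow> nat"
  assumes "tower R le" and "poset R le"
    and "level R le l = {x, y, z}" and "card {x, y, z} = 3"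
    and rank_less: "\<forall>u\<in>R. \<forall>w\<in>R. less le u w \<longrightarrow> f u < f w"
    and far: "\<forall>u\<in>R. \<forall>w\<in>R. f u + eta \<le> f w \<longrightarrow> less le u w"
    and "f x \<le> f y" and "f y \<le> f z" and "f x + eta = f z + 1"
  shows "f x < f y \<and> f y < f z"
proof -
  have "2 < card (level R le l)" using assms(3,4) by simp
  then obtain B h c m where "B \<subseteq> R" and grid: "grid B le h c" and "1 \<le> h"
    and no_full: "\<forall>k. k + 1 \<le> h \<longrightarrow> \<not> setless le (c k ` {..<3}) (c (k + 1) ` {..<3})"
    and "m \<le> h" and row: "level R le l = c m ` {..<3}"
    by (rule tower_large_level_is_row[OF assms(1,2)])
  from \<open>B \<subseteq> R\<close> have "\<forall>u\<in>B. \<forall>w\<in>B. less le u w \<longrightarrow> f u < f w"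
    and "\<forall>u\<in>B. \<forall>w\<in>B. f u + eta \<le> f w \<longrightarrow> less le u w"
    using rank_less far by blast+
  moreover have "c m ` {..<3} = {x, y, z}" using row assms(3) by simp
  ultimately show ?thesis
    using grid_row_strictly_spread[OF grid \<open>1 \<le> h\<close> no_full \<open>m \<le> h\<close>] assms(7-9) by blast
qed

theorem lemma3p6:
  fixes S R :: "'a set" and le :: "'a \<Rightarrow> 'a \<Rightarrow> bool" and eta l :: nat and x y z :: 'a
  assumes "eta \<ge> 2"
    and "frakN eta S le"
    and "retract R S le"
    and "tower R le"
    and "level R le l = {x, y, z}"
    and "card {x, y, z} = 3"
    and "lam S le x \<le> lam S le y" and "lam S le y \<le> lam S le z"
  shows "lam S le z - lam S le x \<le> eta - 1
         \<and> (lam S le z - lam S le x = eta - 1 \<longrightarrow> lam S le x < lam S le y \<and> lam S le y < lam S le z)"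
proof -
  have "R \<subseteq> S" using retract_subset[OF assms(3)] .
  have far: "\<forall>u\<in>R. \<forall>w\<in>R. lam S le u + eta \<le> lam S le w \<longrightarrow> less le u w"
    using frakN_far_less[OF assms(2)] \<open>R \<subseteq> S\<close> by blast
  have rank_less: "\<forall>u\<in>R. \<forall>w\<in>R. less le u w \<longrightarrow> lam S le u < lam S le w"
    using frakN_less_lam_less[OF assms(2)] \<open>R \<subseteq> S\<close> by blast
  have "poset R le" using poset_subset[OF frakN_poset[OF assms(2)] \<open>R \<subseteq> S\<close>] .
  have xz: "x \<in> level R le l" "z \<in> level R le l" "x \<in> R" "z \<in> R"
    using assms(5) level_subset[of R le l] by auto
  then have "\<not> lam S le x + eta \<le> lam S le z" using far level_not_less[OF xz(1,2)] by blast
  moreover have "lam S le x < lam S le y \<and> lam S le y < lam S le z"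
    if "lam S le z - lam S le x = eta - 1"
  proof -
    have "lam S le x + eta = lam S le z + 1" using that assms(1,7,8) by linarith
    then show ?thesis
      using tower_level_strictly_spread[OF assms(4) \<open>poset R le\<close> assms(5,6) rank_less far] assms(7,8)
      by blast
  qed
  ultimately show ?thesis using assms(1) by linarith
qed

end
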